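(* Let $A=(a(x),dF(x))$ and $B=(b(x),dF(x))$ be games. Then $f(p)=\exp\big(\int\log(pa(x)+(1-p)b(x))\,dF(x)\big)/e^r$ is continuous on $[0,1]$.
   Context: A game is a pair $(a(x),dF(x))$ with $dF$ a probability measure on $\mathbb{R}$ and $a\ge0$ measurable with finite positive integral. A real $r$ is fixed; convention $\exp(-\infty)=0$. *)

theory Defs
  imports "HOL-Probability.Probability"
begin

definition log_ext :: "real \<Rightarrow> ereal" where
  "log_ext x = (if x > 0 then ereal (ln x) else -\<infinity>)"

definition ext_integral :: "'a measure \<Rightarrow> ('a \<Rightarrow> ereal) \<Rightarrow> ereal" where
  "ext_integral M g =
     enn2ereal (\<integral>\<^sup>+ x. e2ennreal (max 0 (g x)) \<partial>M)
   - enn2ereal (\<integral>\<^sup>+ x. e2ennreal (max 0 (- g x)) \<partial>M)"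

text \<open>Extended exponential with exp(-infinity) = 0 (the value at +infinity is
  irrelevant in the application and is set to 0).\<close>
definition exp_ext :: "ereal \<Rightarrow> real" where
  "exp_ext t = (case t of ereal x \<Rightarrow> exp x | _ \<Rightarrow> 0)"

definition game :: "real measure \<Rightarrow> (real \<Rightarrow> real) \<Rightarrow> bool" where
  "game F a \<longleftrightarrow> prob_space F \<and> sets F = sets borel \<and> a \<in> borel_measurable F
     \<and> (\<forall>x. 0 \<le> a x) \<and> integrable F a \<and> 0 < integral\<^sup>L F a"

end

theory Submission
  imports Defs
begin

(* Write Y p = p a + (1 - p) b and split log Y p into its positive part ln (max 1 (Y p)),
   which is dominated by a + b and so has an integral P p that is continuous in p by dominated
   convergence, and its negative part, whose integral N p lies in [0, \<infinity>]. Then f p is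
   exp_ext (P p - N p) / e^r, and exp_ext is continuous at every point except +\<infinity>, so it suffices
   that N is continuous as an [0, \<infinity>]-valued function. Fatou's lemma makes N lower
   semicontinuous. Upper semicontinuity comes from the pointwise bound Y q \<ge> c q * Y p with
   c = mix_ratio p, where c q \<rightarrow> 1 as q \<rightarrow> p: it gives N q \<le> - ln (c q) + N p. *)

lemma tendsto_exp_ext:
  assumes g: "(g \<longlongrightarrow> t) F" and "t \<noteq> \<infinity>"
  shows "((\<lambda>x. exp_ext (g x)) \<longlongrightarrow> exp_ext t) F"
proof (cases t)
  case (real r)
  have "((\<lambda>x. exp (real_of_ereal (g x))) \<longlongrightarrow> exp r) F"
    using g real by (intro tendsto_intros) simp
  moreover have "eventually (\<lambda>x. exp (real_of_ereal (g x)) = exp_ext (g x)) F"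
  proof -
    have "(g \<longlongrightarrow> ereal r) F"
      using g real by simp
    moreover have "ereal (r - 1) < ereal r" "ereal r < ereal (r + 1)"
      by simp_all
    ultimately have "eventually (\<lambda>x. ereal (r - 1) < g x \<and> g x < ereal (r + 1)) F"
      by (intro eventually_conj order_tendstoD)
    then show ?thesis
      by eventually_elim (auto simp: exp_ext_def split: ereal.split)
  qed
  ultimately show ?thesis
    using real by (simp add: exp_ext_def Lim_transform_eventually)
next
  case MInf
  have "exp_ext t = 0"
    using MInf by (simp add: exp_ext_def)
  show ?thesis
    unfolding \<open>exp_ext t = 0\<close>
  proof (rule order_tendstoI)
    fix y :: real assume "y < 0"
    then show "eventually (\<lambda>x. y < exp_ext (g x)) F"
      by (intro always_eventually) (auto simp: exp_ext_def split: ereal.split intro: less_le_trans)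
  next
    fix y :: real assume "0 < y"
    have "(g \<longlongrightarrow> -\<infinity>) F" "-\<infinity> < ereal (ln y)"
      using g MInf by simp_all
    then have "eventually (\<lambda>x. g x < ereal (ln y)) F"
      by (rule order_tendstoD)
    then show "eventually (\<lambda>x. exp_ext (g x) < y) F"
    proof eventually_elim
      case (elim x)
      show ?case
      proof (cases "g x")
        case (real u)
        then have "exp u < exp (ln y)"
          using elim by simp
        then show ?thesis
          using real \<open>0 < y\<close> by (simp add: exp_ext_def)
      qed (use elim \<open>0 < y\<close> in \<open>auto simp: exp_ext_def\<close>)
    qed
  qed
qed (use assms(2) in blast)

definition log_minus :: "real \<Rightarrow> ennreal" where
  "log_minus y = (if 0 < y then ennreal (- ln y) else \<infinity>)"

lemma borel_measurable_log_minus [measurable]: "log_minus \<in> borel_measurable borel"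
  unfolding log_minus_def by measurable

lemma e2ennreal_max_0_log_ext: "e2ennreal (max 0 (log_ext y)) = ennreal (ln (max 1 y))"
  by (cases "1 \<le> y") (auto simp: log_ext_def max_def ennreal_neg zero_ereal_def)

lemma e2ennreal_max_0_uminus_log_ext: "e2ennreal (max 0 (- log_ext y)) = log_minus y"
  by (cases "1 \<le> y") (auto simp: log_ext_def log_minus_def max_def ennreal_neg zero_ereal_def)

lemma ext_integral_log_ext:
  assumes "integrable M (\<lambda>x. ln (max 1 (Y x)))"
  shows "ext_integral M (\<lambda>x. log_ext (Y x))
    = ereal (\<integral>x. ln (max 1 (Y x)) \<partial>M) - enn2ereal (\<integral>\<^sup>+x. log_minus (Y x) \<partial>M)"
proof -
  have "(\<integral>\<^sup>+x. ennreal (ln (max 1 (Y x))) \<partial>M) = ennreal (\<integral>x. ln (max 1 (Y x)) \<partial>M)"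
    by (rule nn_integral_eq_integral[OF assms]) simp
  moreover have "0 \<le> (\<integral>x. ln (max 1 (Y x)) \<partial>M)"
    by (rule integral_nonneg_AE) simp
  ultimately show ?thesis
    unfolding ext_integral_def e2ennreal_max_0_log_ext e2ennreal_max_0_uminus_log_ext by simp
qed

lemma log_minus_le_scaled:
  assumes "0 < c" "c * y \<le> y'"
  shows "log_minus y' \<le> ennreal (- ln c) + log_minus y"
proof (cases "0 < y")
  case True
  have "0 < c * y"
    using assms(1) True by simp
  with assms(2) have "0 < y'"
    by linarith
  have "ln c + ln y = ln (c * y)"
    using assms(1) True by (simp add: ln_mult)
  also have "\<dots> \<le> ln y'"
    using \<open>0 < c * y\<close> assms(2) by simp
  finally have "ln c + ln y \<le> ln y'" .
  then have "ennreal (- ln y') \<le> ennreal (max 0 (- ln c) + max 0 (- ln y))"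
    by (intro ennreal_leI) linarith
  also have "\<dots> = ennreal (max 0 (- ln c)) + ennreal (max 0 (- ln y))"
    by (intro ennreal_plus) auto
  also have "\<dots> = ennreal (- ln c) + ennreal (- ln y)"
    by (simp only: ennreal_max_0)
  finally show ?thesis
    using True \<open>0 < y'\<close> by (simp add: log_minus_def)
qed (simp add: log_minus_def)

lemma tendsto_log_minus:
  assumes z: "(z \<longlongrightarrow> z0) F" and "0 \<le> z0"
  shows "((\<lambda>n. log_minus (z n)) \<longlongrightarrow> log_minus z0) F"
proof (cases "z0 = 0")
  case False
  with assms have "0 < z0" by simp
  have "((\<lambda>n. ennreal (- ln (z n))) \<longlongrightarrow> ennreal (- ln z0)) F"
    using \<open>0 < z0\<close> by (intro tendsto_intros z) auto
  moreover have "eventually (\<lambda>n. ennreal (- ln (z n)) = log_minus (z n)) F"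
    using order_tendstoD(1)[OF z \<open>0 < z0\<close>] by eventually_elim (simp add: log_minus_def)
  ultimately show ?thesis
    using \<open>0 < z0\<close> by (simp add: log_minus_def tendsto_cong)
next
  case True
  then have "log_minus z0 = top"
    by (simp add: log_minus_def)
  show ?thesis
    unfolding \<open>log_minus z0 = top\<close>
  proof (rule tendsto_top_iff_ennreal[THEN iffD2], intro allI impI)
    fix l :: real assume "0 \<le> l"
    have "eventually (\<lambda>n. z n < exp (- l)) F"
      using order_tendstoD(2)[OF z] True by simp
    then show "eventually (\<lambda>n. ennreal l < log_minus (z n)) F"
    proof eventually_elim
      case (elim n)
      then have "0 < z n \<Longrightarrow> l < - ln (z n)"
        using ln_less_cancel_iff[of "z n" "exp (- l)"] by auto
      then show ?case
        using \<open>0 \<le> l\<close> by (auto simp: log_minus_def ennreal_less_iff)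
    qed
  qed
qed

lemma mixture_nonneg:
  fixes a b :: real
  assumes "p \<in> {0..1}" "0 \<le> a" "0 \<le> b"
  shows "0 \<le> p * a + (1 - p) * b"
  using assms by (auto intro!: add_nonneg_nonneg mult_nonneg_nonneg)

lemma tendsto_mixture:
  "(s \<longlongrightarrow> p) F \<Longrightarrow> ((\<lambda>n. s n * a + (1 - s n) * b) \<longlongrightarrow> p * a + (1 - p) * (b :: real)) F"
  by (intro tendsto_add tendsto_mult_right tendsto_diff tendsto_const)

lemma abs_ln_max_1_mixture_le:
  fixes a b :: real
  assumes "p \<in> {0..1}" "0 \<le> a" "0 \<le> b"
  shows "\<bar>ln (max 1 (p * a + (1 - p) * b))\<bar> \<le> a + b"
proof -
  have "p * a \<le> a" "(1 - p) * b \<le> b"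
    using assms by (auto intro: mult_left_le_one_le)
  moreover have "ln (max 1 (p * a + (1 - p) * b)) \<le> max 1 (p * a + (1 - p) * b) - 1"
    by (rule ln_le_minus_one) simp
  ultimately have "ln (max 1 (p * a + (1 - p) * b)) \<le> a + b"
    using assms by linarith
  then show ?thesis
    by simp
qed

(* The largest c with c (p a + (1 - p) b) \<le> q a + (1 - q) b for all a, b \<ge> 0;
   the case split avoids the junk value q / 0 = 0. *)
definition mix_ratio :: "real \<Rightarrow> real \<Rightarrow> real" where
  "mix_ratio p q = min (if p = 0 then 1 else q / p) (if p = 1 then 1 else (1 - q) / (1 - p))"

lemma mix_ratio_mult_le:
  assumes p: "p \<in> {0..1}" and q: "q \<in> {0..1}" and "0 \<le> a" "0 \<le> b"
  shows "mix_ratio p q * (p * a + (1 - p) * b) \<le> q * a + (1 - q) * b"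
proof -
  have "mix_ratio p q * p \<le> q"
  proof (cases "p = 0")
    case False
    then have "mix_ratio p q \<le> q / p"
      by (simp add: mix_ratio_def)
    with False p show ?thesis
      by (simp add: pos_le_divide_eq)
  qed (use q in simp)
  moreover have "mix_ratio p q * (1 - p) \<le> 1 - q"
  proof (cases "p = 1")
    case False
    then have "mix_ratio p q \<le> (1 - q) / (1 - p)"
      by (simp add: mix_ratio_def)
    with False p show ?thesis
      by (simp add: pos_le_divide_eq)
  qed (use q in simp)
  ultimately have "(mix_ratio p q * p) * a + (mix_ratio p q * (1 - p)) * b \<le> q * a + (1 - q) * b"
    using assms by (intro add_mono mult_right_mono) auto
  then show ?thesis
    by (simp add: algebra_simps)
qed

lemma tendsto_mix_ratio:
  assumes "(s \<longlongrightarrow> p) F"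
  shows "((\<lambda>n. mix_ratio p (s n)) \<longlongrightarrow> 1) F"
proof -
  have "((\<lambda>n. mix_ratio p (s n)) \<longlongrightarrow> mix_ratio p p) F"
    unfolding mix_ratio_def
  proof (intro tendsto_min)
    show "((\<lambda>n. if p = 0 then 1 else s n / p) \<longlongrightarrow> (if p = 0 then 1 else p / p)) F"
    proof (cases "p = 0")
      case False
      then show ?thesis
        using tendsto_divide[OF assms tendsto_const False] by simp
    qed simp
    show "((\<lambda>n. if p = 1 then 1 else (1 - s n) / (1 - p))
        \<longlongrightarrow> (if p = 1 then 1 else (1 - p) / (1 - p))) F"
    proof (cases "p = 1")
      case False
      then have "1 - p \<noteq> 0"
        by simp
      then show ?thesis
        using False
          tendsto_divide[OF tendsto_diff[OF tendsto_const[of 1] assms] tendsto_const \<open>1 - p \<noteq> 0\<close>]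
        by simp
    qed simp
  qed
  moreover have "mix_ratio p p = 1"
    by (simp add: mix_ratio_def)
  ultimately show ?thesis
    by simp
qed

lemma integrable_ln_max_1_mixture:
  fixes a b :: "'a \<Rightarrow> real"
  assumes "integrable M a" "integrable M b" "\<And>x. 0 \<le> a x" "\<And>x. 0 \<le> b x" "p \<in> {0..1}"
  shows "integrable M (\<lambda>x. ln (max 1 (p * a x + (1 - p) * b x)))"
proof (rule Bochner_Integration.integrable_bound)
  have [measurable]: "a \<in> borel_measurable M" "b \<in> borel_measurable M"
    using assms by auto
  show "integrable M (\<lambda>x. a x + b x)"
    using assms by (intro Bochner_Integration.integrable_add)
  show "(\<lambda>x. ln (max 1 (p * a x + (1 - p) * b x))) \<in> borel_measurable M"
    by measurable
  show "AE x in M. norm (ln (max 1 (p * a x + (1 - p) * b x))) \<le> norm (a x + b x)"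
    unfolding real_norm_def
    by (intro AE_I2 order_trans[OF abs_ln_max_1_mixture_le abs_ge_self] assms)
qed

lemma continuous_on_integral_ln_max_1_mixture:
  fixes a b :: "'a \<Rightarrow> real"
  assumes "integrable M a" "integrable M b" "\<And>x. 0 \<le> a x" "\<And>x. 0 \<le> b x"
  shows "continuous_on {0..1} (\<lambda>p. \<integral>x. ln (max 1 (p * a x + (1 - p) * b x)) \<partial>M)"
proof (rule continuous_on_sequentiallyI)
  have [measurable]: "a \<in> borel_measurable M" "b \<in> borel_measurable M"
    using assms by auto
  fix s :: "nat \<Rightarrow> real" and p :: real
  assume s: "\<forall>n. s n \<in> {0..1}" and "s \<longlonglongrightarrow> p"
  show "(\<lambda>n. \<integral>x. ln (max 1 (s n * a x + (1 - s n) * b x)) \<partial>M)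
      \<longlonglongrightarrow> (\<integral>x. ln (max 1 (p * a x + (1 - p) * b x)) \<partial>M)"
  proof (rule integral_dominated_convergence[where w = "\<lambda>x. a x + b x"])
    show "integrable M (\<lambda>x. a x + b x)"
      using assms by (intro Bochner_Integration.integrable_add)
    show "AE x in M. (\<lambda>n. ln (max 1 (s n * a x + (1 - s n) * b x)))
        \<longlonglongrightarrow> ln (max 1 (p * a x + (1 - p) * b x))"
    proof (rule AE_I2)
      fix x
      show "(\<lambda>n. ln (max 1 (s n * a x + (1 - s n) * b x)))
          \<longlonglongrightarrow> ln (max 1 (p * a x + (1 - p) * b x))"
        using tendsto_mixture[OF \<open>s \<longlonglongrightarrow> p\<close>] by (intro tendsto_ln tendsto_max tendsto_const) auto
    qed
    show "AE x in M. norm (ln (max 1 (s n * a x + (1 - s n) * b x))) \<le> a x + b x" for n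
      unfolding real_norm_def using s by (intro AE_I2 abs_ln_max_1_mixture_le assms) simp
  qed measurable
qed

lemma nn_integral_log_minus_mixture_le:
  fixes a b :: "'a \<Rightarrow> real"
  assumes "prob_space M" and [measurable]: "a \<in> borel_measurable M" "b \<in> borel_measurable M"
    and a: "\<And>x. 0 \<le> a x" and b: "\<And>x. 0 \<le> b x"
    and p: "p \<in> {0..1}" and q: "q \<in> {0..1}" and c: "0 < mix_ratio p q"
  shows "(\<integral>\<^sup>+x. log_minus (q * a x + (1 - q) * b x) \<partial>M)
    \<le> ennreal (- ln (mix_ratio p q)) + (\<integral>\<^sup>+x. log_minus (p * a x + (1 - p) * b x) \<partial>M)"
proof -
  interpret prob_space M by fact
  have "(\<integral>\<^sup>+x. log_minus (q * a x + (1 - q) * b x) \<partial>M)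
      \<le> (\<integral>\<^sup>+x. ennreal (- ln (mix_ratio p q)) + log_minus (p * a x + (1 - p) * b x) \<partial>M)"
    by (intro nn_integral_mono log_minus_le_scaled c mix_ratio_mult_le p q a b)
  also have "\<dots> = ennreal (- ln (mix_ratio p q)) + (\<integral>\<^sup>+x. log_minus (p * a x + (1 - p) * b x) \<partial>M)"
    by (subst nn_integral_add) (simp_all add: emeasure_space_1)
  finally show ?thesis .
qed

lemma continuous_on_nn_integral_log_minus_mixture:
  fixes a b :: "'a \<Rightarrow> real"
  assumes M: "prob_space M" and [measurable]: "a \<in> borel_measurable M" "b \<in> borel_measurable M"
    and a: "\<And>x. 0 \<le> a x" and b: "\<And>x. 0 \<le> b x"
  shows "continuous_on {0..1} (\<lambda>p. \<integral>\<^sup>+x. log_minus (p * a x + (1 - p) * b x) \<partial>M)"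
proof -
  define N where "N p = (\<integral>\<^sup>+x. log_minus (p * a x + (1 - p) * b x) \<partial>M)" for p
  have "continuous_on {0..1} N"
  proof (rule continuous_on_sequentiallyI)
    fix s :: "nat \<Rightarrow> real" and p :: real
    assume s: "\<forall>n. s n \<in> {0..1}" and p: "p \<in> {0..1}" and lim: "s \<longlonglongrightarrow> p"
    have "N p = (\<integral>\<^sup>+x. liminf (\<lambda>n. log_minus (s n * a x + (1 - s n) * b x)) \<partial>M)"
      unfolding N_def
      by (intro nn_integral_cong lim_imp_Liminf[symmetric] tendsto_log_minus tendsto_mixture lim
          mixture_nonneg p a b) simp
    also have "\<dots> \<le> liminf (\<lambda>n. N (s n))"
      unfolding N_def by (rule nn_integral_liminf) measurable
    finally have fatou: "N p \<le> liminf (\<lambda>n. N (s n))" .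
    show "(\<lambda>n. N (s n)) \<longlonglongrightarrow> N p"
    proof (rule order_tendstoI)
      fix y assume "y < N p"
      with fatou show "eventually (\<lambda>n. y < N (s n)) sequentially"
        by (intro less_LiminfD) (rule order.strict_trans2)
    next
      fix y assume "N p < y"
      have "(\<lambda>n. ennreal (- ln (mix_ratio p (s n))) + N p) \<longlonglongrightarrow> ennreal (- ln 1) + N p"
        by (intro tendsto_add tendsto_ennrealI tendsto_minus tendsto_ln tendsto_mix_ratio lim
            tendsto_const) simp
      then have "eventually (\<lambda>n. ennreal (- ln (mix_ratio p (s n))) + N p < y) sequentially"
        using \<open>N p < y\<close> by (intro order_tendstoD(2)) simp_all
      moreover have "eventually (\<lambda>n. 0 < mix_ratio p (s n)) sequentially"
        using tendsto_mix_ratio[OF lim] by (rule order_tendstoD(1)) simp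
      ultimately show "eventually (\<lambda>n. N (s n) < y) sequentially"
      proof eventually_elim
        case (elim n)
        then show ?case
          using nn_integral_log_minus_mixture_le[OF M assms(2,3) a b p s[rule_format, of n]]
          unfolding N_def by (meson order.strict_trans1)
      qed
    qed
  qed
  then show ?thesis
    by (simp add: N_def)
qed

theorem lemmaD11:
  fixes F :: "real measure" and a b :: "real \<Rightarrow> real" and r :: real
  assumes "game F a" and "game F b"
  shows "continuous_on {0..1}
    (\<lambda>p::real. exp_ext (ext_integral F (\<lambda>x. log_ext (p * a x + (1 - p) * b x))) / exp r)"
proof -
  from assms have F: "prob_space F"
    and a: "a \<in> borel_measurable F" "integrable F a" "\<And>x. 0 \<le> a x"
    and b: "b \<in> borel_measurable F" "integrable F b" "\<And>x. 0 \<le> b x"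
    unfolding game_def by auto
  define P where "P p = (\<integral>x. ln (max 1 (p * a x + (1 - p) * b x)) \<partial>F)" for p
  define N where "N p = (\<integral>\<^sup>+x. log_minus (p * a x + (1 - p) * b x) \<partial>F)" for p
  have "continuous_on {0..1} P"
    unfolding P_def using a b by (intro continuous_on_integral_ln_max_1_mixture)
  moreover have "continuous_on {0..1} N"
    unfolding N_def using F a b by (intro continuous_on_nn_integral_log_minus_mixture)
  moreover have "ereal (P p) - enn2ereal (N p) \<noteq> \<infinity>" for p
    by (cases "N p" rule: ennreal_cases) simp_all
  ultimately have "continuous_on {0..1} (\<lambda>p. exp_ext (ereal (P p) - enn2ereal (N p)) / exp r)"
    unfolding continuous_on_def
    by (auto intro!: tendsto_divide tendsto_const tendsto_exp_ext tendsto_diff_ereal_general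
        tendsto_enn2erealI)
  moreover have
    "ext_integral F (\<lambda>x. log_ext (p * a x + (1 - p) * b x)) = ereal (P p) - enn2ereal (N p)"
    if "p \<in> {0..1}" for p
    unfolding P_def N_def using a b that by (intro ext_integral_log_ext integrable_ln_max_1_mixture)
  ultimately show ?thesis
    by (auto elim!: continuous_on_eq)
qed

end
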